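(* Let $p$ be a prime, let $n\in\mathbb{N}$ and set $q=p^n$. The number of solutions $(a_2,a_3,a_4,b_2,b_3,b_4)\in(\mathbb{Z}/q\mathbb{Z})^6$ to the system \[ a_2b_3-a_3b_2 = a_2b_4-a_4b_2 = a_3b_4-a_4b_3 = 0 \] which additionally satisfy $a_2b_3=a_3b_2=0$ is $O(n^2q^{7/2})$, with an absolute implied constant. *)

theory Defs
  imports Complex_Main "HOL-Number_Theory.Cong"
begin

definition sol_set :: "nat \<Rightarrow> (nat \<times> nat \<times> nat \<times> nat \<times> nat \<times> nat) set" where
  "sol_set q = {(a2, a3, a4, b2, b3, b4).
      a2 < q \<and> a3 < q \<and> a4 < q \<and> b2 < q \<and> b3 < q \<and> b4 < q \<and>
      [a2 * b3 = a3 * b2] (mod q) \<and>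
      [a2 * b4 = a4 * b2] (mod q) \<and>
      [a3 * b4 = a4 * b3] (mod q) \<and>
      [a2 * b3 = 0] (mod q) \<and>
      [a3 * b2 = 0] (mod q)}"

end

(*
  A solution is determined by the pairs (a2, b3), (a3, b2), (a4, b4). The first two have
  product 0 mod q, and (a4, b4) solves the linear congruences a2 b4 = a4 b2 and
  a3 b4 = a4 b3, each of which has at most q min(gcd(a_i, q), gcd(b_i, q)) solutions.
  Bounding the least of the four gcds by the geometric mean of min(gcd(a2, q), gcd(b3, q))
  and min(gcd(a3, q), gcd(b2, q)) bounds the count by q S^2, where S sums
  sqrt (min (gcd a q) (gcd b q)) over the pairs with a b = 0 mod q.
  For q = p^n: if gcd(b, q) = p^j <= gcd(a, q), then a is divisible by p^(n-j) and by p^j,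
  and at most p^(n-j) residues b have gcd(b, q) = p^j; summing over the n + 1 values
  of j gives S <= 2 (n + 1) q^(5/4), hence at most 4 (n + 1)^2 q^(7/2) solutions.
*)
theory Submission
  imports Defs "HOL-Computational_Algebra.Primes"
begin

lemma cong_mult_lcancel_gcd_nat:
  fixes u y1 y2 q :: nat
  assumes "q \<noteq> 0" and "[u * y1 = u * y2] (mod q)"
  shows "[y1 = y2] (mod q div gcd u q)"
proof -
  define g where "g = gcd u q"
  have "g \<noteq> 0" using assms(1) by (simp add: g_def)
  obtain u' m where u: "u = g * u'" and q: "q = g * m"
    unfolding g_def by (meson gcd_dvd1 gcd_dvd2 dvdE)
  have "coprime (u div g) (q div g)"
    using div_gcd_coprime assms(1) unfolding g_def by blast
  with \<open>g \<noteq> 0\<close> have "coprime u' m" by (simp add: u q)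
  from assms(2) have "[g * (u' * y1) = g * (u' * y2)] (mod g * m)"
    by (simp add: u q mult.assoc)
  with \<open>g \<noteq> 0\<close> have "[u' * y1 = u' * y2] (mod m)"
    by (simp add: cong_def)
  with \<open>coprime u' m\<close> have "[y1 = y2] (mod m)"
    by (simp add: cong_mult_lcancel_nat)
  with \<open>g \<noteq> 0\<close> show ?thesis
    unfolding g_def[symmetric] by (simp add: q)
qed

lemma card_multiples_less:
  fixes d q :: nat
  assumes "d dvd q"
  shows "card {a. a < q \<and> d dvd a} = q div d"
proof (cases "d = 0")
  case False
  from assms obtain m where q: "q = d * m" by (elim dvdE)
  have "{a. a < q \<and> d dvd a} = (\<lambda>k. d * k) ` {..<m}"
  proof (intro equalityI subsetI)
    fix a assume "a \<in> {a. a < q \<and> d dvd a}"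
    then obtain k where "a = d * k" "d * k < d * m" using q by (auto simp: dvd_def)
    then show "a \<in> (\<lambda>k. d * k) ` {..<m}" by simp
  qed (use q False in auto)
  moreover have "inj_on (\<lambda>k. d * k) {..<m}" using False by (simp add: inj_on_def)
  ultimately show ?thesis using q False by (simp add: card_image)
qed (use assms in simp)

lemma card_cong_mult_le_gcd:
  fixes u c q :: nat
  shows "card {y. y < q \<and> [u * y = c] (mod q)} \<le> gcd u q"
proof (cases "q = 0")
  case False
  let ?S = "{y. y < q \<and> [u * y = c] (mod q)}"
  define m where "m = q div gcd u q"
  have q: "q = m * gcd u q" by (simp add: m_def)
  with False have "m > 0" by (metis gr0I mult_is_0)
  have "inj_on (\<lambda>y. y div m) ?S"
  proof (rule inj_onI)
    fix y1 y2 assume "y1 \<in> ?S" "y2 \<in> ?S" and div_eq: "y1 div m = y2 div m"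
    then have "[u * y1 = c] (mod q)" "[c = u * y2] (mod q)" by (simp_all add: cong_sym_eq)
    then have "[u * y1 = u * y2] (mod q)" by (rule cong_trans)
    then have "y1 mod m = y2 mod m"
      using cong_mult_lcancel_gcd_nat False unfolding m_def cong_def by blast
    with div_eq show "y1 = y2" by (metis div_mult_mod_eq)
  qed
  moreover have "y div m < gcd u q" if "y < q" for y
    using that q \<open>m > 0\<close> by (metis div_less_iff_less_mult mult.commute)
  then have "(\<lambda>y. y div m) ` ?S \<subseteq> {..<gcd u q}" by auto
  ultimately show ?thesis by (metis card_inj_on_le card_lessThan finite_lessThan)
qed simp

lemma card_cong_bilinear_le:
  fixes u w q :: nat
  shows "card {(x, y). x < q \<and> y < q \<and> [u * y = x * w] (mod q)} \<le> q * min (gcd u q) (gcd w q)"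
proof -
  let ?E = "{(x, y). x < q \<and> y < q \<and> [u * y = x * w] (mod q)}"
  have "?E = (SIGMA x:{..<q}. {y. y < q \<and> [u * y = x * w] (mod q)})" by auto
  then have "card ?E = (\<Sum>x<q. card {y. y < q \<and> [u * y = x * w] (mod q)})" by simp
  also have "\<dots> \<le> (\<Sum>x<q. gcd u q)" by (intro sum_mono card_cong_mult_le_gcd)
  finally have by_u: "card ?E \<le> q * gcd u q" by simp
  have "?E = prod.swap ` (SIGMA y:{..<q}. {x. x < q \<and> [w * x = u * y] (mod q)})"
    by (auto simp: cong_sym_eq mult.commute image_iff)
  then have "card ?E = (\<Sum>y<q. card {x. x < q \<and> [w * x = u * y] (mod q)})"
    by (simp add: card_image)
  also have "\<dots> \<le> (\<Sum>y<q. gcd w q)" by (intro sum_mono card_cong_mult_le_gcd)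
  finally have by_w: "card ?E \<le> q * gcd w q" by simp
  from by_u by_w show ?thesis by simp
qed

definition zero_product_pairs :: "nat \<Rightarrow> (nat \<times> nat) set" where
  "zero_product_pairs q = {(a, b). a < q \<and> b < q \<and> [a * b = 0] (mod q)}"

definition gcd_weight :: "nat \<Rightarrow> nat \<Rightarrow> nat \<Rightarrow> real" where
  "gcd_weight q a b = sqrt (min (gcd a q) (gcd b q))"

lemma card_fiber_le_gcd_weights:
  fixes q a2 a3 b2 b3 :: nat
  shows "card {(a4, b4). a4 < q \<and> b4 < q \<and> [a2 * b4 = a4 * b2] (mod q) \<and> [a3 * b4 = a4 * b3] (mod q)}
    \<le> q * gcd_weight q a2 b3 * gcd_weight q a3 b2"
proof -
  let ?F = "{(a4, b4). a4 < q \<and> b4 < q \<and> [a2 * b4 = a4 * b2] (mod q) \<and> [a3 * b4 = a4 * b3] (mod q)}"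
  let ?E = "\<lambda>u w. {(x, y). x < q \<and> y < q \<and> [u * y = x * w] (mod q)}"
  define m where "m = min (min (gcd a2 q) (gcd b2 q)) (min (gcd a3 q) (gcd b3 q))"
  have "finite (?E u w)" for u w by (rule finite_subset[of _ "{..<q} \<times> {..<q}"]) auto
  then have "card ?F \<le> card (?E a2 b2)" "card ?F \<le> card (?E a3 b3)"
    by (auto intro: card_mono)
  then have "card ?F \<le> q * min (gcd a2 q) (gcd b2 q)" "card ?F \<le> q * min (gcd a3 q) (gcd b3 q)"
    using card_cong_bilinear_le by (auto intro: le_trans)
  then have "card ?F \<le> q * m"
    unfolding m_def nat_mult_min_right by (rule min.boundedI)
  then have "real (card ?F) \<le> real q * (sqrt m * sqrt m)"
    by (simp flip: of_nat_mult)
  also have "\<dots> \<le> real q * (gcd_weight q a2 b3 * gcd_weight q a3 b2)"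
    unfolding gcd_weight_def m_def by (intro mult_left_mono mult_mono) auto
  finally show ?thesis by (simp add: mult.assoc)
qed

lemma card_sol_set_le_gcd_weight_sum:
  fixes q :: nat
  shows "real (card (sol_set q)) \<le> q * (\<Sum>(a, b)\<in>zero_product_pairs q. gcd_weight q a b)\<^sup>2"
proof -
  let ?P = "zero_product_pairs q"
  define w where "w = (\<lambda>(a, b). gcd_weight q a b)"
  define F where "F = (\<lambda>(a2, b3) (a3, b2). {(a4, b4). a4 < q \<and> b4 < q \<and>
    [a2 * b4 = a4 * b2] (mod q) \<and> [a3 * b4 = a4 * b3] (mod q)})"
  define h :: "nat \<times> nat \<times> nat \<times> nat \<times> nat \<times> nat \<Rightarrow> _"
    where "h = (\<lambda>(a2, a3, a4, b2, b3, b4). ((a2, b3), (a3, b2), (a4, b4)))"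
  have fin_P: "finite ?P"
    by (rule finite_subset[of _ "{..<q} \<times> {..<q}"]) (auto simp: zero_product_pairs_def)
  have fin_F: "finite (F x y)" for x y
    by (rule finite_subset[of _ "{..<q} \<times> {..<q}"]) (auto simp: F_def split: prod.splits)
  have "inj_on h (sol_set q)" by (auto simp: h_def inj_on_def)
  moreover have "h ` sol_set q \<subseteq> (SIGMA x:?P. SIGMA y:?P. F x y)"
    by (auto simp: h_def F_def sol_set_def zero_product_pairs_def)
  ultimately have "card (sol_set q) \<le> card (SIGMA x:?P. SIGMA y:?P. F x y)"
    using fin_P fin_F by (intro card_inj_on_le) auto
  also have "\<dots> = (\<Sum>x\<in>?P. \<Sum>y\<in>?P. card (F x y))"
    using fin_P fin_F by (simp add: card_SigmaI)
  finally have "real (card (sol_set q)) \<le> (\<Sum>x\<in>?P. \<Sum>y\<in>?P. real (card (F x y)))"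
    by (simp flip: of_nat_sum)
  also have "\<dots> \<le> (\<Sum>x\<in>?P. \<Sum>y\<in>?P. q * (w x * w y))"
    using card_fiber_le_gcd_weights
    by (intro sum_mono) (auto simp: F_def w_def mult.assoc split: prod.splits)
  also have "\<dots> = q * (\<Sum>x\<in>?P. \<Sum>y\<in>?P. w x * w y)"
    by (simp add: sum_distrib_left)
  also have "\<dots> = q * (\<Sum>x\<in>?P. w x)\<^sup>2"
    by (simp add: power2_eq_square sum_product)
  finally show ?thesis by (simp add: w_def)
qed

lemma gcd_weight_sum_le:
  fixes q :: nat
  shows "(\<Sum>(a, b)\<in>zero_product_pairs q. gcd_weight q a b)
    \<le> 2 * (\<Sum>b<q. card {a. a < q \<and> [a * b = 0] (mod q) \<and> gcd b q \<le> gcd a q} * sqrt (gcd b q))"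
proof -
  let ?P = "zero_product_pairs q"
  let ?A = "\<lambda>b. {a. a < q \<and> [a * b = 0] (mod q) \<and> gcd b q \<le> gcd a q}"
  \<comment> \<open>v (a, b) + v (b, a) covers the minimum; by the symmetry of zero_product_pairs both halves sum alike.\<close>
  define v where "v = (\<lambda>(a, b). if gcd b q \<le> gcd a q then sqrt (gcd b q) else 0)"
  have fin_P: "finite ?P"
    by (rule finite_subset[of _ "{..<q} \<times> {..<q}"]) (auto simp: zero_product_pairs_def)
  have fin_A: "finite (?A b)" for b by simp
  have swap_P: "prod.swap ` ?P = ?P"
    by (auto simp: zero_product_pairs_def mult.commute image_iff)
  have "(\<Sum>x\<in>?P. v (prod.swap x)) = (\<Sum>x\<in>prod.swap ` ?P. v x)"
    by (simp add: sum.reindex)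
  then have v_swap: "(\<Sum>x\<in>?P. v (prod.swap x)) = (\<Sum>x\<in>?P. v x)"
    by (simp only: swap_P)
  have "(\<Sum>(a, b)\<in>?P. gcd_weight q a b) \<le> (\<Sum>x\<in>?P. v x + v (prod.swap x))"
    by (intro sum_mono) (auto simp: gcd_weight_def v_def min_def)
  also have "\<dots> = 2 * (\<Sum>x\<in>?P. v x)"
    by (simp add: sum.distrib v_swap)
  also have "(\<Sum>x\<in>?P. v x) = (\<Sum>(a, b)\<in>{(a, b)\<in>?P. gcd b q \<le> gcd a q}. sqrt (gcd b q))"
    using fin_P by (simp add: sum.inter_filter v_def case_prod_unfold)
  also have "{(a, b)\<in>?P. gcd b q \<le> gcd a q} = prod.swap ` (SIGMA b:{..<q}. ?A b)"
    by (auto simp: zero_product_pairs_def image_iff)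
  also have "(\<Sum>(a, b)\<in>prod.swap ` (SIGMA b:{..<q}. ?A b). sqrt (gcd b q))
      = (\<Sum>(b, a)\<in>(SIGMA b:{..<q}. ?A b). sqrt (gcd b q))"
    by (simp add: sum.reindex case_prod_unfold)
  also have "\<dots> = (\<Sum>b<q. \<Sum>a\<in>?A b. sqrt (gcd b q))"
    by (rule sum.Sigma[symmetric]) (simp_all add: fin_A)
  also have "\<dots> = (\<Sum>b<q. card (?A b) * sqrt (gcd b q))"
    by simp
  finally show ?thesis .
qed

lemma prime_power_gcdE:
  fixes p n b :: nat
  assumes "prime p"
  obtains j where "j \<le> n" and "gcd b (p ^ n) = p ^ j"
  using divides_primepow_nat[OF assms, of "gcd b (p ^ n)" n] by auto

lemma card_gcd_eq_le:
  fixes d q :: nat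
  assumes "d dvd q"
  shows "card {b. b < q \<and> gcd b q = d} \<le> q div d"
proof -
  have "card {b. b < q \<and> gcd b q = d} \<le> card {b. b < q \<and> d dvd b}"
    by (rule card_mono) auto
  with card_multiples_less[OF assms] show ?thesis by simp
qed

lemma card_zero_product_partners_prime_power_le:
  fixes p n b j :: nat
  assumes "prime p" and "j \<le> n" and gcd_b: "gcd b (p ^ n) = p ^ j"
  shows "card {a. a < p ^ n \<and> [a * b = 0] (mod p ^ n) \<and> gcd b (p ^ n) \<le> gcd a (p ^ n)}
    \<le> p ^ (n - max j (n - j))"
proof -
  let ?A = "{a. a < p ^ n \<and> [a * b = 0] (mod p ^ n) \<and> gcd b (p ^ n) \<le> gcd a (p ^ n)}"
  have "p > 1" using assms(1) prime_gt_1_nat by blast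
  have "p ^ max j (n - j) dvd a" if "a \<in> ?A" for a
  proof -
    from that have "[b * a = b * 0] (mod p ^ n)" by (simp add: mult.commute)
    with \<open>p > 1\<close> have "[a = 0] (mod p ^ n div p ^ j)"
      using cong_mult_lcancel_gcd_nat[of "p ^ n" b a 0] gcd_b by simp
    with \<open>p > 1\<close> \<open>j \<le> n\<close> have "p ^ (n - j) dvd a"
      by (simp add: power_diff cong_0_iff)
    moreover obtain k where k: "gcd a (p ^ n) = p ^ k"
      using prime_power_gcdE[OF assms(1)] by blast
    with that gcd_b \<open>p > 1\<close> have "j \<le> k" by simp
    with k have "p ^ j dvd a" by (metis gcd_dvd1 le_imp_power_dvd dvd_trans)
    ultimately show ?thesis by (simp add: max_def)
  qed
  then have "card ?A \<le> card {a. a < p ^ n \<and> p ^ max j (n - j) dvd a}"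
    by (intro card_mono) auto
  also have "\<dots> = p ^ n div p ^ max j (n - j)"
    using \<open>j \<le> n\<close> by (intro card_multiples_less) (simp add: le_imp_power_dvd)
  also have "\<dots> = p ^ (n - max j (n - j))"
    using \<open>p > 1\<close> \<open>j \<le> n\<close> by (simp add: power_diff)
  finally show ?thesis .
qed

lemma sum_le_sum_gcd_levels:
  fixes F Y :: "nat \<Rightarrow> real" and p n :: nat
  assumes "prime p"
    and F_le: "\<And>b j. b < p ^ n \<Longrightarrow> j \<le> n \<Longrightarrow> gcd b (p ^ n) = p ^ j \<Longrightarrow> F b \<le> Y j"
    and Y_nonneg: "\<And>j. 0 \<le> Y j"
  shows "(\<Sum>b<p ^ n. F b) \<le> (\<Sum>j\<le>n. p ^ (n - j) * Y j)"
proof -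
  let ?level = "\<lambda>d. {b. b \<in> {..<p ^ n} \<and> gcd b (p ^ n) = d}"
  have "p > 1" using assms(1) prime_gt_1_nat by blast
  then have inj: "inj_on (\<lambda>j. p ^ j) {..n}" by (simp add: inj_on_def)
  have "gcd b (p ^ n) \<in> (\<lambda>j. p ^ j) ` {..n}" for b
    using prime_power_gcdE[OF assms(1), of n b] by (metis atMost_iff image_eqI)
  then have "(\<lambda>b. gcd b (p ^ n)) ` {..<p ^ n} \<subseteq> (\<lambda>j. p ^ j) ` {..n}" by auto
  then have "(\<Sum>b<p ^ n. F b) = (\<Sum>d\<in>(\<lambda>j. p ^ j) ` {..n}. \<Sum>b\<in>?level d. F b)"
    by (intro sum.group[symmetric]) auto
  also have "\<dots> = (\<Sum>j\<le>n. \<Sum>b\<in>?level (p ^ j). F b)"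
    using inj by (simp add: sum.reindex)
  also have "\<dots> \<le> (\<Sum>j\<le>n. card (?level (p ^ j)) * Y j)"
    by (intro sum_mono sum_bounded_above) (auto intro: F_le)
  also have "\<dots> \<le> (\<Sum>j\<le>n. p ^ (n - j) * Y j)"
  proof (intro sum_mono mult_right_mono Y_nonneg)
    fix j assume "j \<in> {..n}"
    then have "card (?level (p ^ j)) \<le> p ^ n div p ^ j"
      using card_gcd_eq_le[of "p ^ j" "p ^ n"] by (simp add: le_imp_power_dvd)
    also have "\<dots> = p ^ (n - j)" using \<open>p > 1\<close> \<open>j \<in> {..n}\<close> by (simp add: power_diff)
    finally show "real (card (?level (p ^ j))) \<le> p ^ (n - j)" by (simp flip: of_nat_power)
  qed
  finally show ?thesis .
qed

lemma level_term_le_powr: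
  fixes x :: real and j n :: nat
  assumes "1 \<le> x" and "j \<le> n"
  shows "x ^ (n - j) * (x ^ (n - max j (n - j)) * sqrt (x ^ j)) \<le> x powr (5 * n / 4)"
proof -
  \<comment> \<open>The exponent (n - j) + (n - max j (n - j)) + j / 2 is largest at j = n / 2.\<close>
  have power_eq: "x ^ k = x powr k" for k
    using assms by (simp add: powr_realpow)
  have "sqrt (x powr j) = x powr (j / 2)"
    using assms by (simp add: powr_half_sqrt[symmetric] powr_powr)
  then have "x ^ (n - j) * (x ^ (n - max j (n - j)) * sqrt (x ^ j))
      = x powr (real (n - j) + (real (n - max j (n - j)) + j / 2))"
    by (simp only: power_eq powr_add)
  also have "\<dots> \<le> x powr (5 * n / 4)"
    using assms by (intro powr_mono) (auto simp: max_def of_nat_diff)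
  finally show ?thesis .
qed

lemma gcd_weight_sum_prime_power_le:
  fixes p n :: nat
  assumes "prime p"
  shows "(\<Sum>(a, b)\<in>zero_product_pairs (p ^ n). gcd_weight (p ^ n) a b) \<le> 2 * (n + 1) * p powr (5 * n / 4)"
proof -
  have "p > 1" using assms prime_gt_1_nat by blast
  let ?A = "\<lambda>b. {a. a < p ^ n \<and> [a * b = 0] (mod p ^ n) \<and> gcd b (p ^ n) \<le> gcd a (p ^ n)}"
  let ?Y = "\<lambda>j. real p ^ (n - max j (n - j)) * sqrt (real p ^ j)"
  have "(\<Sum>b<p ^ n. card (?A b) * sqrt (gcd b (p ^ n))) \<le> (\<Sum>j\<le>n. p ^ (n - j) * ?Y j)"
  proof (rule sum_le_sum_gcd_levels[OF assms])
    fix b j assume "j \<le> n" and gcd_b: "gcd b (p ^ n) = p ^ j"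
    then have "real (card (?A b)) \<le> real p ^ (n - max j (n - j))"
      using card_zero_product_partners_prime_power_le[OF assms] by (simp flip: of_nat_power)
    with gcd_b show "card (?A b) * sqrt (gcd b (p ^ n)) \<le> ?Y j"
      by (simp add: mult_right_mono)
  qed simp
  also have "\<dots> \<le> (\<Sum>j\<le>n. p powr (5 * n / 4))"
  proof (rule sum_mono)
    fix j assume "j \<in> {..n}"
    with \<open>p > 1\<close> show "p ^ (n - j) * ?Y j \<le> p powr (5 * n / 4)"
      using level_term_le_powr[of "real p" j n] by simp
  qed
  finally show ?thesis
    using gcd_weight_sum_le[of "p ^ n"] by (simp add: algebra_simps)
qed

lemma card_sol_set_prime_power_le:
  fixes p n :: nat
  assumes "prime p"
  shows "real (card (sol_set (p ^ n))) \<le> 4 * (real n + 1)\<^sup>2 * real (p ^ n) powr (7 / 2)"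
proof -
  have "p > 0" using assms by (simp add: prime_gt_0_nat)
  define S where "S = (\<Sum>(a, b)\<in>zero_product_pairs (p ^ n). gcd_weight (p ^ n) a b)"
  have "0 \<le> S" by (simp add: S_def gcd_weight_def case_prod_unfold sum_nonneg)
  have powr_seven_halves: "(p ^ n) powr (7 / 2) = p ^ n * (p powr (5 * n / 4))\<^sup>2"
  proof -
    have "real (p ^ n) = p powr n" using \<open>p > 0\<close> by (simp add: powr_realpow)
    with \<open>p > 0\<close> show ?thesis by (simp add: powr_powr power2_eq_square mult.commute flip: powr_add)
  qed
  have "real (card (sol_set (p ^ n))) \<le> p ^ n * S\<^sup>2"
    using card_sol_set_le_gcd_weight_sum[of "p ^ n"] by (simp add: S_def)
  also have "\<dots> \<le> p ^ n * (2 * (n + 1) * p powr (5 * n / 4))\<^sup>2"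
    using gcd_weight_sum_prime_power_le[OF assms, of n] \<open>0 \<le> S\<close>
    by (intro mult_left_mono power_mono) (simp_all add: S_def)
  also have "\<dots> = 4 * (real n + 1)\<^sup>2 * (p ^ n) powr (7 / 2)"
    unfolding powr_seven_halves by (simp add: power2_eq_square algebra_simps)
  finally show ?thesis .
qed

theorem lemma5p2:
  shows "\<exists>C::real. \<forall>(p::nat) (n::nat). prime p \<longrightarrow> n \<ge> 1 \<longrightarrow>
           real (card (sol_set (p ^ n))) \<le> C * real n ^ 2 * real (p ^ n) powr (7/2)"
proof (intro exI allI impI)
  fix p n :: nat
  assume "prime p" and "n \<ge> 1"
  then have "(real n + 1)\<^sup>2 \<le> (2 * real n)\<^sup>2" by (intro power_mono) auto
  then have "4 * (real n + 1)\<^sup>2 * real (p ^ n) powr (7 / 2) \<le> 16 * real n ^ 2 * real (p ^ n) powr (7 / 2)"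
    by (intro mult_right_mono) (simp_all add: power_mult_distrib)
  with card_sol_set_prime_power_le[OF \<open>prime p\<close>, of n]
  show "real (card (sol_set (p ^ n))) \<le> 16 * real n ^ 2 * real (p ^ n) powr (7/2)"
    by linarith
qed

end
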